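(* Let $G$ be a simple graph with at least one edge and clique number $\omega$. Then $G$ has at least $\dfrac{\binom{\omega}{3}}{1+3(\omega-3)}$ $\mathcal{H}$-eigenvalues (counted with multiplicity) not less than $3$.
   Context: For an oriented edge $e$ write $e^-$ for its tail and $e^+$ for its head. For distinct edges $e,e'$: $e\leftrightarrow e'$ means $e^+=e'^-$ or $e'^+=e^-$; $e\overset{\pm}{\sim}e'$ means $e^+=e'^+$ or $e^-=e'^-$; $e\vartriangle e'$ means $e,e'$ are two edges of a common triangle. $\triangle(e)$ is the number of triangles containing $e$. The Helmholtzian matrix $\mathcal{H}(G)=(h_{ee'})$ is indexed by edges, with $h_{ee}=\triangle(e)+2$, and for $e\ne e'$: $h_{ee'}=-1$ if $e\leftrightarrow e'$ and not $e\vartriangle e'$; $h_{ee'}=1$ if $e\overset{\pm}{\sim}e'$ and not $e\vartriangle e'$; $h_{ee'}=0$ otherwise. The $\mathcal{H}$-eigenvalues of $G$ are the eigenvalues of $\mathcal{H}(G)$ for an arbitrary edge orientation (independent of the orientation). *)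

theory Defs
  imports "Jordan_Normal_Form.Char_Poly"
begin

text \<open>A simple graph on a finite vertex set V is given together with an orientation:
  D is the set of oriented edges (arcs). Each undirected edge {u,v} appears
  exactly once, as (u,v) or (v,u).\<close>

definition oriented_simple_graph :: "'a set \<Rightarrow> ('a \<times> 'a) set \<Rightarrow> bool" where
  "oriented_simple_graph V D \<longleftrightarrow> finite V \<and> D \<subseteq> V \<times> V \<and>
     (\<forall>u v. (u, v) \<in> D \<longrightarrow> u \<noteq> v \<and> (v, u) \<notin> D)"

definition adj :: "('a \<times> 'a) set \<Rightarrow> 'a \<Rightarrow> 'a \<Rightarrow> bool" where
  "adj D u v \<longleftrightarrow> (u, v) \<in> D \<or> (v, u) \<in> D"

definition is_clique :: "'a set \<Rightarrow> ('a \<times> 'a) set \<Rightarrow> 'a set \<Rightarrow> bool" where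
  "is_clique V D C \<longleftrightarrow> C \<subseteq> V \<and> (\<forall>u\<in>C. \<forall>v\<in>C. u \<noteq> v \<longrightarrow> adj D u v)"

definition clique_number :: "'a set \<Rightarrow> ('a \<times> 'a) set \<Rightarrow> nat" where
  "clique_number V D = Max (card ` {C. is_clique V D C})"

definition is_triangle :: "'a set \<Rightarrow> ('a \<times> 'a) set \<Rightarrow> 'a set \<Rightarrow> bool" where
  "is_triangle V D T \<longleftrightarrow> card T = 3 \<and> is_clique V D T"

definition ends :: "'a \<times> 'a \<Rightarrow> 'a set" where
  "ends e = {fst e, snd e}"

definition num_tri :: "'a set \<Rightarrow> ('a \<times> 'a) set \<Rightarrow> 'a \<times> 'a \<Rightarrow> nat" where
  "num_tri V D e = card {T. is_triangle V D T \<and> ends e \<subseteq> T}"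

definition in_common_tri :: "'a set \<Rightarrow> ('a \<times> 'a) set \<Rightarrow> 'a \<times> 'a \<Rightarrow> 'a \<times> 'a \<Rightarrow> bool" where
  "in_common_tri V D e e' \<longleftrightarrow> e \<noteq> e' \<and>
     (\<exists>T. is_triangle V D T \<and> ends e \<subseteq> T \<and> ends e' \<subseteq> T)"

definition head_tail :: "'a \<times> 'a \<Rightarrow> 'a \<times> 'a \<Rightarrow> bool" where
  "head_tail e e' \<longleftrightarrow> snd e = fst e' \<or> snd e' = fst e"

definition same_end :: "'a \<times> 'a \<Rightarrow> 'a \<times> 'a \<Rightarrow> bool" where
  "same_end e e' \<longleftrightarrow> snd e = snd e' \<or> fst e = fst e'"

definition helm_entry :: "'a set \<Rightarrow> ('a \<times> 'a) set \<Rightarrow> 'a \<times> 'a \<Rightarrow> 'a \<times> 'a \<Rightarrow> real" where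
  "helm_entry V D e e' =
     (if e = e' then real (num_tri V D e) + 2
      else if head_tail e e' \<and> \<not> in_common_tri V D e e' then -1
      else if same_end e e' \<and> \<not> in_common_tri V D e e' then 1
      else 0)"

definition helmholtzian :: "'a set \<Rightarrow> ('a \<times> 'a) set \<Rightarrow> ('a \<times> 'a) list \<Rightarrow> real mat" where
  "helmholtzian V D es = mat (length es) (length es) (\<lambda>(i, j). helm_entry V D (es ! i) (es ! j))"

definition num_eigs_ge :: "real mat \<Rightarrow> real \<Rightarrow> nat" where
  "num_eigs_ge A c = (\<Sum>x\<in>{x. poly (char_poly A) x = 0 \<and> x \<ge> c}. order x (char_poly A))"

end

theory Submission
  imports Defs "Jordan_Normal_Form.Schur_Decomposition"
begin

text \<open>
  The Helmholtzian is a sum of two Gram matrices: its entry at arcs e, e' is the sum over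
  vertices v of \<beta>(v,e) \<beta>(v,e') plus the sum over triangles T of \<sigma>(T,e) \<sigma>(T,e'), where \<beta> is
  the signed vertex-arc incidence and \<sigma>(T,e) the sign of e with respect to a cyclic orientation
  of T. Hence x' H x \<ge> \<Sum>T\<in>S. (\<sigma>(T) \<bullet> x)^2 for every set S of triangles. If the triangles of S
  pairwise share at most one vertex, they share no edge, so the vectors \<sigma>(T) are orthogonal
  with \<sigma>(T) \<bullet> \<sigma>(T) \<ge> 3, and x' H x \<ge> 3 x' x on their span. By the Courant-Fischer principle
  H then has at least |S| eigenvalues \<ge> 3.

  In a clique of size \<omega>, take an inclusion-maximal family of
  triples pairwise meeting in at most one point. Every one of the \<omega> choose 3 triples meets
  some member in two points, and a fixed triple meets at most 1 + 3(\<omega> - 3) triples in two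
  points, so the family has at least (\<omega> choose 3) / (1 + 3(\<omega> - 3)) members.
\<close>

section \<open>Real symmetric matrices\<close>

lemma real_symmetric_complex_eigenvalue_real:
  fixes A :: "real mat"
  assumes A: "A \<in> carrier_mat n n" and sym: "transpose_mat A = A"
    and ev: "eigenvalue (map_mat complex_of_real A) a"
  shows "a \<in> \<real>"
proof -
  let ?Ac = "map_mat complex_of_real A"
  have Ac: "?Ac \<in> carrier_mat n n" using A by simp
  obtain v where v: "v \<in> carrier_vec n" "v \<noteq> 0\<^sub>v n" and Av: "?Ac *\<^sub>v v = a \<cdot>\<^sub>v v"
    using ev A unfolding eigenvalue_def eigenvector_def by auto
  have conj_Av: "conjugate (?Ac *\<^sub>v v) = ?Ac *\<^sub>v conjugate v"
    using Ac v by (intro eq_vecI) (auto simp: scalar_prod_def cnj_sum)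
  have "a * (conjugate v \<bullet> v) = conjugate v \<bullet> (?Ac *\<^sub>v v)"
    using Av v by simp
  also have "\<dots> = (transpose_mat ?Ac *\<^sub>v conjugate v) \<bullet> v"
    using transpose_vec_mult_scalar[OF Ac v(1), of "conjugate v"] v by simp
  also have "\<dots> = conjugate (a \<cdot>\<^sub>v v) \<bullet> v"
    using sym conj_Av Av by (simp add: map_mat_transpose)
  also have "\<dots> = cnj a * (conjugate v \<bullet> v)"
    using v by (simp add: conjugate_smult_vec)
  finally have "(a - cnj a) * (conjugate v \<bullet> v) = 0" by (simp add: algebra_simps)
  moreover have "conjugate v \<bullet> v \<noteq> 0"
    using v conjugate_vec_sprod_comm[OF v(1) v(1)] conjugate_square_eq_0_vec[OF v(1)] by simp
  ultimately show ?thesis by (simp add: Reals_cnj_iff)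
qed

lemma char_poly_real_symmetric_splits:
  fixes A :: "real mat"
  assumes A: "A \<in> carrier_mat n n" and sym: "transpose_mat A = A"
  shows "\<exists>ds. char_poly A = (\<Prod>d\<leftarrow>ds. [:- d, 1:]) \<and> length ds = n"
proof -
  let ?Ac = "map_mat complex_of_real A"
  interpret of_real_poly: map_poly_inj_idom_hom complex_of_real ..
  have Ac: "?Ac \<in> carrier_mat n n" using A by simp
  obtain as where cp: "char_poly ?Ac = (\<Prod>a\<leftarrow>as. [:- a, 1:])" and len: "length as = n"
    using char_poly_factorized[OF Ac] by blast
  have "a \<in> \<real>" if "a \<in> set as" for a
  proof (rule real_symmetric_complex_eigenvalue_real[OF A sym])
    have "poly (char_poly ?Ac) a = 0" unfolding cp using that
      by (simp add: poly_prod_list prod_list_zero_iff)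
    thus "eigenvalue ?Ac a" using eigenvalue_root_char_poly[OF Ac] by simp
  qed
  hence "(\<Prod>a\<leftarrow>as. [:- a, 1:]) = (\<Prod>a\<leftarrow>as. [:- complex_of_real (Re a), 1:])"
    by (intro arg_cong[where f = prod_list] map_cong) (auto elim: Reals_cases)
  moreover have "map_poly complex_of_real (char_poly A) = char_poly ?Ac"
    by (rule of_real_hom.char_poly_hom[OF A, symmetric])
  ultimately have "map_poly complex_of_real (char_poly A) = map_poly complex_of_real (\<Prod>d\<leftarrow>map Re as. [:- d, 1:])"
    using cp by (simp add: of_real_poly.hom_prod_list o_def)
  thus ?thesis using len by (intro exI[of _ "map Re as"]) simp
qed

definition trace_mat :: "'a :: comm_ring mat \<Rightarrow> 'a" where
  "trace_mat A = (\<Sum>i<dim_row A. A $$ (i, i))"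

lemma trace_mat_mult_commute:
  assumes "A \<in> carrier_mat n m" "B \<in> carrier_mat m n"
  shows "trace_mat (A * B) = trace_mat (B * A)"
proof -
  have "trace_mat (A * B) = (\<Sum>i<n. \<Sum>k<m. A $$ (i, k) * B $$ (k, i))"
    unfolding trace_mat_def using assms by (simp add: scalar_prod_def lessThan_atLeast0)
  also have "\<dots> = (\<Sum>k<m. \<Sum>i<n. B $$ (k, i) * A $$ (i, k))"
    by (subst sum.swap) (simp add: mult.commute)
  also have "\<dots> = trace_mat (B * A)"
    unfolding trace_mat_def using assms by (simp add: scalar_prod_def lessThan_atLeast0)
  finally show ?thesis .
qed

lemma trace_mat_similar:
  assumes A: "A \<in> carrier_mat n n" and sim: "similar_mat_wit A T P Q"
  shows "trace_mat A = trace_mat T"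
proof -
  obtain T: "T \<in> carrier_mat n n" and P: "P \<in> carrier_mat n n" and Q: "Q \<in> carrier_mat n n"
    and QP: "Q * P = 1\<^sub>m n" and A_eq: "A = P * T * Q"
    using similar_mat_witD2[OF A sim] by metis
  have "trace_mat A = trace_mat (P * (T * Q))" using A_eq P T Q by simp
  also have "\<dots> = trace_mat (T * Q * P)" using P T Q by (simp add: trace_mat_mult_commute[of P n n])
  also have "T * Q * P = T" using T Q P QP by simp
  finally show ?thesis .
qed

lemma real_symmetric_eigenvalue_ne:
  fixes A :: "real mat"
  assumes A: "A \<in> carrier_mat n n" and sym: "transpose_mat A = A"
    and trace: "trace_mat A \<noteq> real n * s"
  obtains \<mu> where "\<mu> \<noteq> s" "eigenvalue A \<mu>"
proof -
  obtain ds where cp: "char_poly A = (\<Prod>d\<leftarrow>ds. [:- d, 1:])" and len: "length ds = n"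
    using char_poly_real_symmetric_splits[OF A sym] by blast
  obtain T P Q where "schur_decomposition A ds = (T, P, Q)"
    by (cases "schur_decomposition A ds") auto
  from schur_decomposition[OF A cp this]
  have "trace_mat A = sum_list ds"
    using trace_mat_similar[OF A] by (auto simp: trace_mat_def diag_mat_def sum_list_sum_nth lessThan_atLeast0)
  hence "\<exists>d\<in>set ds. d \<noteq> s"
    using trace len by (metis replicate_length_same sum_list_replicate)
  thus ?thesis
    using that eigenvalue_root_char_poly[OF A] unfolding cp
    by (auto simp: poly_prod_list prod_list_zero_iff)
qed

definition orthonormal_eigensystem :: "real mat \<Rightarrow> real vec list \<Rightarrow> real list \<Rightarrow> bool" where
  "orthonormal_eigensystem A us ds \<longleftrightarrow> length ds = length us \<and> set us \<subseteq> carrier_vec (dim_row A) \<and>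
     (\<forall>i<length us. \<forall>j<length us. us ! i \<bullet> us ! j = (if i = j then 1 else 0)) \<and>
     (\<forall>i<length us. A *\<^sub>v us ! i = ds ! i \<cdot>\<^sub>v us ! i)"

lemma orthonormal_eigensystemD:
  assumes "orthonormal_eigensystem A us ds" "A \<in> carrier_mat n n" "i < length us"
  shows "us ! i \<in> carrier_vec n" "A *\<^sub>v us ! i = ds ! i \<cdot>\<^sub>v us ! i"
    and "\<And>j. j < length us \<Longrightarrow> us ! i \<bullet> us ! j = (if i = j then 1 else 0)"
  using assms nth_mem[OF assms(3)] unfolding orthonormal_eigensystem_def by auto

text \<open>The matrix A - \<Sum>i. (d_i - s) u_i u_i', in which the eigenvalues d_i of the u_i are replaced by s.\<close>
definition deflate :: "real mat \<Rightarrow> real vec list \<Rightarrow> real list \<Rightarrow> real \<Rightarrow> real mat" where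
  "deflate A us ds s = mat (dim_row A) (dim_col A)
     (\<lambda>(a, b). A $$ (a, b) - (\<Sum>i<length us. (ds ! i - s) * us ! i $ a * us ! i $ b))"

lemma deflate_carrier: "A \<in> carrier_mat n n \<Longrightarrow> deflate A us ds s \<in> carrier_mat n n"
  unfolding deflate_def by simp

lemma deflate_symmetric:
  assumes "A \<in> carrier_mat n n" "transpose_mat A = A"
  shows "transpose_mat (deflate A us ds s) = deflate A us ds s"
proof -
  have "A $$ (b, a) = A $$ (a, b)" if "a < n" "b < n" for a b
    using assms that by (metis index_transpose_mat(1) carrier_matD)
  thus ?thesis using assms(1) by (intro eq_matI) (auto simp: deflate_def ac_simps)
qed

lemma deflate_mult_vec:
  assumes A: "A \<in> carrier_mat n n" and v: "v \<in> carrier_vec n" and a: "a < n"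
  shows "(deflate A us ds s *\<^sub>v v) $ a =
    (A *\<^sub>v v) $ a - (\<Sum>i<length us. (ds ! i - s) * us ! i $ a * (us ! i \<bullet> v))"
proof -
  have "(deflate A us ds s *\<^sub>v v) $ a =
      (\<Sum>b<n. A $$ (a, b) * v $ b) - (\<Sum>b<n. \<Sum>i<length us. (ds ! i - s) * us ! i $ a * (us ! i $ b * v $ b))"
    using A v a by (simp add: deflate_def scalar_prod_def lessThan_atLeast0 left_diff_distrib
        sum_subtractf sum_distrib_right mult.assoc)
  also have "(\<Sum>b<n. \<Sum>i<length us. (ds ! i - s) * us ! i $ a * (us ! i $ b * v $ b)) =
      (\<Sum>i<length us. (ds ! i - s) * us ! i $ a * (us ! i \<bullet> v))"
    using v by (subst sum.swap) (simp add: scalar_prod_def lessThan_atLeast0 sum_distrib_left)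
  finally show ?thesis using A v a by (simp add: scalar_prod_def lessThan_atLeast0)
qed

lemma trace_deflate:
  assumes A: "A \<in> carrier_mat n n" and sys: "orthonormal_eigensystem A us ds"
  shows "trace_mat (deflate A us ds s) = trace_mat A - sum_list ds + real (length us) * s"
proof -
  have norm: "(\<Sum>a<n. us ! i $ a * us ! i $ a) = 1" if "i < length us" for i
    using orthonormal_eigensystemD(1)[OF sys A that] orthonormal_eigensystemD(3)[OF sys A that that]
    by (simp add: scalar_prod_def lessThan_atLeast0)
  have "trace_mat (deflate A us ds s) =
      trace_mat A - (\<Sum>i<length us. \<Sum>a<n. (ds ! i - s) * (us ! i $ a * us ! i $ a))"
    using A by (subst sum.swap) (simp add: trace_mat_def deflate_def sum_subtractf mult.assoc)
  also have "\<dots> = trace_mat A - (\<Sum>i<length us. ds ! i) + real (length us) * s"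
    using norm by (simp flip: sum_distrib_left add: sum_subtractf)
  also have "(\<Sum>i<length us. ds ! i) = sum_list ds"
    using sys by (simp add: orthonormal_eigensystem_def sum_list_sum_nth lessThan_atLeast0)
  finally show ?thesis .
qed

lemma deflate_eigenvector:
  assumes A: "A \<in> carrier_mat n n" and sys: "orthonormal_eigensystem A us ds" and l: "l < length us"
  shows "deflate A us ds s *\<^sub>v us ! l = s \<cdot>\<^sub>v us ! l"
proof -
  note u = orthonormal_eigensystemD(1)[OF sys A l] and Au = orthonormal_eigensystemD(2)[OF sys A l]
    and orth = orthonormal_eigensystemD(3)[OF sys A _ l]
  show ?thesis
  proof (rule eq_vecI)
    fix a assume "a < dim_vec (s \<cdot>\<^sub>v us ! l)"
    hence a: "a < n" using u by simp
    have "(\<Sum>i<length us. (ds ! i - s) * us ! i $ a * (us ! i \<bullet> us ! l)) = (ds ! l - s) * us ! l $ a"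
      using l by (simp add: orth if_distrib[of "\<lambda>x. _ * x"] cong: if_cong)
    hence "(deflate A us ds s *\<^sub>v us ! l) $ a = (A *\<^sub>v us ! l) $ a - (ds ! l - s) * us ! l $ a"
      using deflate_mult_vec[OF A u a, of us ds s] by simp
    thus "(deflate A us ds s *\<^sub>v us ! l) $ a = (s \<cdot>\<^sub>v us ! l) $ a"
      using Au u a by (simp add: algebra_simps)
  qed (use A u deflate_carrier[OF A] in auto)
qed

lemma real_vec_self_scalar_prod_pos:
  fixes v :: "real vec"
  assumes "v \<in> carrier_vec n" "v \<noteq> 0\<^sub>v n"
  shows "v \<bullet> v > 0"
  using conjugate_square_greater_0_vec[OF assms(1)] assms(2) by simp

lemma orthonormal_eigensystem_snoc:
  assumes A: "A \<in> carrier_mat n n" and sys: "orthonormal_eigensystem A us ds"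
    and v: "v \<in> carrier_vec n" "v \<noteq> 0\<^sub>v n" and Av: "A *\<^sub>v v = \<mu> \<cdot>\<^sub>v v"
    and orth: "\<And>l. l < length us \<Longrightarrow> us ! l \<bullet> v = 0"
  obtains w where "orthonormal_eigensystem A (us @ [w]) (ds @ [\<mu>])"
proof -
  note us = orthonormal_eigensystemD(1)[OF sys A]
  define w where "w = (1 / sqrt (v \<bullet> v)) \<cdot>\<^sub>v v"
  have vv: "v \<bullet> v > 0" by (rule real_vec_self_scalar_prod_pos[OF v])
  have w: "w \<in> carrier_vec n" "w \<bullet> w = 1" "A *\<^sub>v w = \<mu> \<cdot>\<^sub>v w"
    and w_orth: "\<And>l. l < length us \<Longrightarrow> us ! l \<bullet> w = 0 \<and> w \<bullet> us ! l = 0"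
    unfolding w_def using v vv Av A orth us comm_scalar_prod[OF v(1) us]
    by (auto simp: mult_mat_vec smult_smult_assoc mult.commute)
  have "orthonormal_eigensystem A (us @ [w]) (ds @ [\<mu>])"
    using sys A w w_orth unfolding orthonormal_eigensystem_def
    by (auto simp: nth_append less_Suc_eq)
  thus ?thesis by (rule that)
qed

lemma orthonormal_eigensystem_extend:
  fixes A :: "real mat"
  assumes A: "A \<in> carrier_mat n n" and sym: "transpose_mat A = A"
    and sys: "orthonormal_eigensystem A us ds" and len: "length us < n"
  obtains w \<mu> where "orthonormal_eigensystem A (us @ [w]) (ds @ [\<mu>])"
proof -
  \<comment> \<open>Moving the known eigenvalues to s, the trace forces an eigenvalue \<mu> \<noteq> s; its eigenvectors
      are orthogonal to us, hence also eigenvectors of A.\<close>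
  define d where "d = real n - real (length us)"
  define s where "s = (trace_mat A - sum_list ds) / d + 1"
  define B where "B = deflate A us ds s"
  have B: "B \<in> carrier_mat n n" unfolding B_def by (rule deflate_carrier[OF A])
  have Bsym: "transpose_mat B = B" unfolding B_def by (rule deflate_symmetric[OF A sym])
  have "d > 0" using len unfolding d_def by simp
  hence "d * s = trace_mat A - sum_list ds + d" unfolding s_def by (simp add: field_simps)
  hence "real n * s - trace_mat B = d"
    unfolding B_def trace_deflate[OF A sys] d_def by (simp add: algebra_simps)
  hence "trace_mat B \<noteq> real n * s" using \<open>d > 0\<close> by simp
  then obtain \<mu> where "\<mu> \<noteq> s" "eigenvalue B \<mu>" by (rule real_symmetric_eigenvalue_ne[OF B Bsym])
  then obtain v where v: "v \<in> carrier_vec n" "v \<noteq> 0\<^sub>v n" and Bv: "B *\<^sub>v v = \<mu> \<cdot>\<^sub>v v"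
    using B unfolding eigenvalue_def eigenvector_def by auto
  note us = orthonormal_eigensystemD(1)[OF sys A]
  have orth: "us ! l \<bullet> v = 0" if l: "l < length us" for l
  proof -
    have "\<mu> * (us ! l \<bullet> v) = us ! l \<bullet> (B *\<^sub>v v)" using Bv v us[OF l] by simp
    also have "\<dots> = (B *\<^sub>v us ! l) \<bullet> v"
      using transpose_vec_mult_scalar[OF B v(1) us[OF l]] Bsym by simp
    also have "\<dots> = s * (us ! l \<bullet> v)"
      using deflate_eigenvector[OF A sys l] v us[OF l] unfolding B_def by simp
    finally show ?thesis using \<open>\<mu> \<noteq> s\<close> by simp
  qed
  have Av: "A *\<^sub>v v = \<mu> \<cdot>\<^sub>v v"
  proof (rule eq_vecI)
    fix a assume "a < dim_vec (\<mu> \<cdot>\<^sub>v v)"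
    hence a: "a < n" using v by simp
    show "(A *\<^sub>v v) $ a = (\<mu> \<cdot>\<^sub>v v) $ a"
      using deflate_mult_vec[OF A v(1) a, of us ds s] Bv orth unfolding B_def by simp
  qed (use A v in auto)
  show ?thesis by (rule orthonormal_eigensystem_snoc[OF A sys v Av orth that])
qed

lemma orthonormal_eigenbasis_exists:
  fixes A :: "real mat"
  assumes A: "A \<in> carrier_mat n n" and sym: "transpose_mat A = A"
  obtains us ds where "orthonormal_eigensystem A us ds" "length us = n"
proof -
  have "\<exists>us ds. orthonormal_eigensystem A us ds \<and> length us = j" if "j \<le> n" for j
    using that
  proof (induction j)
    case 0
    show ?case by (intro exI[of _ "[]"]) (simp add: orthonormal_eigensystem_def)
  next
    case (Suc j)
    then obtain us ds where sys: "orthonormal_eigensystem A us ds" and len: "length us = j" by auto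
    obtain w \<mu> where "orthonormal_eigensystem A (us @ [w]) (ds @ [\<mu>])"
      using orthonormal_eigensystem_extend[OF A sym sys] len Suc.prems by auto
    thus ?case using len by (intro exI) auto
  qed
  thus ?thesis using that by blast
qed

lemma orthonormal_eigenbasis_diagonalizes:
  assumes A: "A \<in> carrier_mat n n" and sys: "orthonormal_eigensystem A us ds" and len: "length us = n"
  defines "U \<equiv> mat_of_cols n us"
  shows "transpose_mat U * U = 1\<^sub>m n" "U * transpose_mat U = 1\<^sub>m n"
    and "A * U = U * mat_diag n (\<lambda>i. ds ! i)"
proof -
  have U: "U \<in> carrier_mat n n" unfolding U_def using mat_of_cols_carrier(1)[of n us] len by simp
  have col: "col U i = us ! i" if "i < n" for i
    unfolding U_def using that len orthonormal_eigensystemD(1)[OF sys A, of i] by simp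
  show UtU: "transpose_mat U * U = 1\<^sub>m n"
    using U col sys len by (intro eq_matI) (auto simp: orthonormal_eigensystem_def)
  show "U * transpose_mat U = 1\<^sub>m n"
    by (rule mat_mult_left_right_inverse[OF _ U UtU]) (use U in simp)
  show "A * U = U * mat_diag n (\<lambda>i. ds ! i)"
  proof (rule eq_matI)
    fix a j assume "a < dim_row (U * mat_diag n (\<lambda>i. ds ! i))" "j < dim_col (U * mat_diag n (\<lambda>i. ds ! i))"
    hence a: "a < n" and j: "j < n" using U by (auto simp: mat_diag_def)
    have "(A * U) $$ (a, j) = (A *\<^sub>v us ! j) $ a" using A U a j col[OF j] by simp
    also have "\<dots> = ds ! j * us ! j $ a"
      using orthonormal_eigensystemD(1,2)[OF sys A, of j] j len a by simp
    also have "us ! j $ a = U $$ (a, j)"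
      using arg_cong[OF col[OF j], of "\<lambda>v. v $ a"] U a j by simp
    finally show "(A * U) $$ (a, j) = (U * mat_diag n (\<lambda>i. ds ! i)) $$ (a, j)"
      using U a j by (simp add: mat_diag_mult_right mult.commute)
  qed (use A U in \<open>auto simp: mat_diag_def\<close>)
qed

lemma orthonormal_eigenbasis_char_poly:
  assumes A: "A \<in> carrier_mat n n" and sys: "orthonormal_eigensystem A us ds" and len: "length us = n"
  shows "char_poly A = (\<Prod>d\<leftarrow>ds. [:- d, 1:])"
proof -
  let ?U = "mat_of_cols n us" and ?\<Lambda> = "mat_diag n (\<lambda>i. ds ! i)"
  note U = orthonormal_eigenbasis_diagonalizes[OF A sys len]
  have carrier: "?U \<in> carrier_mat n n" "transpose_mat ?U \<in> carrier_mat n n"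
    using mat_of_cols_carrier(1)[of n us] len by auto
  have "A = A * (?U * transpose_mat ?U)" using A U(2) by simp
  also have "\<dots> = ?U * ?\<Lambda> * transpose_mat ?U" using A carrier U(3) by (simp flip: assoc_mult_mat)
  finally have sim: "similar_mat A ?\<Lambda>"
    unfolding similar_mat_def similar_mat_wit_def Let_def
    by (intro exI[of _ ?U] exI[of _ "transpose_mat ?U"]) (use A carrier U(1,2) in auto)
  have "char_poly A = char_poly ?\<Lambda>" by (rule char_poly_similar[OF sim])
  also have "\<dots> = (\<Prod>d\<leftarrow>diag_mat ?\<Lambda>. [:- d, 1:])"
    by (rule char_poly_upper_triangular[OF mat_diag_dim]) (auto simp: upper_triangular_def mat_diag_def)
  also have "diag_mat ?\<Lambda> = ds"
    using sys len by (auto simp: diag_mat_def mat_diag_def orthonormal_eigensystem_def intro: nth_equalityI)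
  finally show ?thesis .
qed

lemma num_eigs_ge_linear_factors:
  assumes "char_poly A = (\<Prod>d\<leftarrow>ds. [:- d, 1:])"
  shows "num_eigs_ge A t = length (filter (\<lambda>d. t \<le> d) ds)"
proof -
  let ?P = "\<lambda>d. t \<le> d"
  have roots: "{x. poly (char_poly A) x = 0 \<and> t \<le> x} = set (filter ?P ds)"
    using assms by (auto simp: poly_prod_list prod_list_zero_iff)
  have "Polynomial.order x (char_poly A) = (\<Sum>d\<leftarrow>ds. Polynomial.order x [:- d, 1:])" for x
    unfolding assms by (subst order_prod_list) (auto simp: o_def)
  also have "(\<Sum>d\<leftarrow>ds. Polynomial.order x [:- d, 1:]) = count_list ds x" for x
    by (induction ds) (auto simp: order_linear')
  moreover have "count_list ds x = count_list (filter ?P ds) x" if "?P x" for x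
    using that by (induction ds) auto
  ultimately have order: "Polynomial.order x (char_poly A) = count_list (filter ?P ds) x" if "?P x" for x
    using that by simp
  show ?thesis
    unfolding num_eigs_ge_def roots by (simp add: order sum_count_set)
qed

lemma orthonormal_eigenbasis_expansion:
  assumes A: "A \<in> carrier_mat n n" and sys: "orthonormal_eigensystem A us ds" and len: "length us = n"
    and x: "x \<in> carrier_vec n"
  shows "x \<bullet> x = (\<Sum>i<n. (us ! i \<bullet> x)\<^sup>2)" and "x \<bullet> (A *\<^sub>v x) = (\<Sum>i<n. ds ! i * (us ! i \<bullet> x)\<^sup>2)"
proof -
  let ?U = "mat_of_cols n us" and ?\<Lambda> = "mat_diag n (\<lambda>i. ds ! i)"
  note U = orthonormal_eigenbasis_diagonalizes[OF A sys len]
  have carrier: "?U \<in> carrier_mat n n" "transpose_mat ?U \<in> carrier_mat n n"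
    using mat_of_cols_carrier(1)[of n us] len by auto
  define y where "y = transpose_mat ?U *\<^sub>v x"
  have y: "y \<in> carrier_vec n" unfolding y_def using carrier x by simp
  have y_nth: "y $ i = us ! i \<bullet> x" if "i < n" for i
    unfolding y_def using that len carrier orthonormal_eigensystemD(1)[OF sys A, of i] by simp
  have x_eq: "x = ?U *\<^sub>v y" unfolding y_def using carrier x U(2) by (simp flip: assoc_mult_mat_vec)
  have "x \<bullet> x = y \<bullet> y"
    using transpose_vec_mult_scalar[OF carrier(2) x y] x_eq unfolding y_def by simp
  thus "x \<bullet> x = (\<Sum>i<n. (us ! i \<bullet> x)\<^sup>2)"
    using y by (simp add: scalar_prod_def lessThan_atLeast0 y_nth power2_eq_square)
  have "A *\<^sub>v x = ?U *\<^sub>v (?\<Lambda> *\<^sub>v y)"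
    using A carrier y U(3) x_eq by (metis assoc_mult_mat_vec mat_diag_dim)
  hence "x \<bullet> (A *\<^sub>v x) = y \<bullet> (?\<Lambda> *\<^sub>v y)"
    using transpose_vec_mult_scalar[OF carrier(1) mult_mat_vec_carrier[OF mat_diag_dim y] x]
    unfolding y_def by simp
  also have "\<dots> = (\<Sum>i<n. ds ! i * (y $ i)\<^sup>2)"
    using y by (simp add: mat_diag_def scalar_prod_def lessThan_atLeast0 power2_eq_square
        if_distrib[of "\<lambda>z. _ * z"] ac_simps cong: if_cong)
  finally show "x \<bullet> (A *\<^sub>v x) = (\<Sum>i<n. ds ! i * (us ! i \<bullet> x)\<^sup>2)" by (simp add: y_nth)
qed

lemma exists_nonzero_kernel_vec:
  fixes M :: "'a :: idom mat"
  assumes M: "M \<in> carrier_mat m k" and mk: "m < k"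
  obtains c where "c \<in> carrier_vec k" "c \<noteq> 0\<^sub>v k" "M *\<^sub>v c = 0\<^sub>v m"
proof -
  define M' where "M' = mat\<^sub>r k k (\<lambda>i. if i = k - 1 then 0\<^sub>v k else if i < m then row M i else 0\<^sub>v k)"
  have "det M' = 0" unfolding M'_def by (rule det_row_0) (use M mk in auto)
  then obtain c where c: "c \<in> carrier_vec k" "c \<noteq> 0\<^sub>v k" and M'c: "M' *\<^sub>v c = 0\<^sub>v k"
    using det_0_iff_vec_prod_zero[of M' k] by (auto simp: M'_def)
  have "M *\<^sub>v c = 0\<^sub>v m"
  proof (rule eq_vecI)
    fix i assume "i < dim_vec (0\<^sub>v m :: 'a vec)"
    hence i: "i < m" by simp
    have "(M *\<^sub>v c) $ i = (M' *\<^sub>v c) $ i" using M i mk by (simp add: M'_def)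
    thus "(M *\<^sub>v c) $ i = 0\<^sub>v m $ i" using M'c i mk by simp
  qed (use M in simp)
  with c show ?thesis by (rule that)
qed

lemma exists_nonzero_vec_orthogonal_image:
  fixes Bm :: "'a :: idom mat"
  assumes Bm: "Bm \<in> carrier_mat n k" and ws: "set ws \<subseteq> carrier_vec n" and len: "length ws < k"
  obtains c where "c \<in> carrier_vec k" "c \<noteq> 0\<^sub>v k" "\<And>w. w \<in> set ws \<Longrightarrow> w \<bullet> (Bm *\<^sub>v c) = 0"
proof -
  have M: "mat_of_rows n ws * Bm \<in> carrier_mat (length ws) k"
    using mat_of_rows_carrier(1)[of n ws] Bm by (rule mult_carrier_mat)
  obtain c where c: "c \<in> carrier_vec k" "c \<noteq> 0\<^sub>v k" and Mc: "(mat_of_rows n ws * Bm) *\<^sub>v c = 0\<^sub>v (length ws)"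
    using exists_nonzero_kernel_vec[OF M len] .
  have "w \<bullet> (Bm *\<^sub>v c) = 0" if w: "w \<in> set ws" for w
  proof -
    obtain r where r: "r < length ws" "ws ! r = w" using w by (auto simp: in_set_conv_nth)
    have "(mat_of_rows n ws * Bm) *\<^sub>v c = mat_of_rows n ws *\<^sub>v (Bm *\<^sub>v c)"
      by (rule assoc_mult_mat_vec) (use Bm c in auto)
    hence "0 = row (mat_of_rows n ws) r \<bullet> (Bm *\<^sub>v c)"
      using Mc r by (metis index_mult_mat_vec index_zero_vec(1) mat_of_rows_carrier(2))
    thus ?thesis using r ws nth_mem[OF r(1)] by auto
  qed
  with c show ?thesis by (rule that)
qed

lemma quadratic_form_lt_orthogonal_to_large_eigenvectors:
  assumes A: "A \<in> carrier_mat n n" and sys: "orthonormal_eigensystem A us ds" and len: "length us = n"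
    and x: "x \<in> carrier_vec n" "x \<noteq> 0\<^sub>v n" and orth: "\<And>i. i < n \<Longrightarrow> t \<le> ds ! i \<Longrightarrow> us ! i \<bullet> x = 0"
  shows "x \<bullet> (A *\<^sub>v x) < t * (x \<bullet> x)"
proof -
  note expansion = orthonormal_eigenbasis_expansion[OF A sys len x(1)]
  have "x \<bullet> x > 0" by (rule real_vec_self_scalar_prod_pos[OF x])
  hence "\<not> (\<forall>i<n. us ! i \<bullet> x = 0)" unfolding expansion(1) by force
  then obtain a where a: "a < n" "us ! a \<bullet> x \<noteq> 0" by blast
  have "0 < (\<Sum>i<n. (t - ds ! i) * (us ! i \<bullet> x)\<^sup>2)"
  proof (rule sum_pos2[of _ a])
    show "0 < (t - ds ! a) * (us ! a \<bullet> x)\<^sup>2" using a orth by force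
    show "\<And>i. i \<in> {..<n} \<Longrightarrow> 0 \<le> (t - ds ! i) * (us ! i \<bullet> x)\<^sup>2"
      using orth by (case_tac "t \<le> ds ! i") auto
  qed (use a in auto)
  thus ?thesis using expansion by (simp add: left_diff_distrib sum_subtractf sum_distrib_left)
qed

lemma num_eigs_ge_lower_bound:
  fixes A Bm :: "real mat"
  assumes A: "A \<in> carrier_mat n n" and sym: "transpose_mat A = A" and Bm: "Bm \<in> carrier_mat n k"
    and form: "\<And>c. c \<in> carrier_vec k \<Longrightarrow> c \<noteq> 0\<^sub>v k \<Longrightarrow>
      Bm *\<^sub>v c \<noteq> 0\<^sub>v n \<and> t * ((Bm *\<^sub>v c) \<bullet> (Bm *\<^sub>v c)) \<le> (Bm *\<^sub>v c) \<bullet> (A *\<^sub>v (Bm *\<^sub>v c))"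
  shows "k \<le> num_eigs_ge A t"
proof (rule ccontr)
  obtain us ds where sys: "orthonormal_eigensystem A us ds" and len: "length us = n"
    using orthonormal_eigenbasis_exists[OF A sym] .
  define I where "I = {i. i < n \<and> t \<le> ds ! i}"
  have "num_eigs_ge A t = card I"
    using num_eigs_ge_linear_factors[OF orthonormal_eigenbasis_char_poly[OF A sys len]] sys len
    unfolding I_def by (simp add: length_filter_conv_card orthonormal_eigensystem_def)
  moreover assume "\<not> k \<le> num_eigs_ge A t"
  ultimately have I_k: "card I < k" by simp
  define ws where "ws = map (\<lambda>i. us ! i) (sorted_list_of_set I)"
  have "finite I" unfolding I_def by simp
  hence ws: "set ws = (\<lambda>i. us ! i) ` I" "length ws = card I" unfolding ws_def by simp_all
  have "set ws \<subseteq> carrier_vec n"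
    unfolding ws(1) I_def using orthonormal_eigensystemD(1)[OF sys A] len by auto
  then obtain c where c: "c \<in> carrier_vec k" "c \<noteq> 0\<^sub>v k"
    and orth_ws: "\<And>w. w \<in> set ws \<Longrightarrow> w \<bullet> (Bm *\<^sub>v c) = 0"
    using exists_nonzero_vec_orthogonal_image[OF Bm] ws(2) I_k by metis
  have orth: "us ! i \<bullet> (Bm *\<^sub>v c) = 0" if "i < n" "t \<le> ds ! i" for i
    using that by (intro orth_ws) (simp add: ws(1) I_def)
  have x: "Bm *\<^sub>v c \<in> carrier_vec n" using Bm c by simp
  have x0: "Bm *\<^sub>v c \<noteq> 0\<^sub>v n" and le: "t * ((Bm *\<^sub>v c) \<bullet> (Bm *\<^sub>v c)) \<le> (Bm *\<^sub>v c) \<bullet> (A *\<^sub>v (Bm *\<^sub>v c))"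
    using form[OF c] by simp_all
  show False
    using le quadratic_form_lt_orthogonal_to_large_eigenvectors[where t = t, OF A sys len x x0 orth] by simp
qed

lemma orthogonal_columns_mult_vec:
  fixes Bm :: "real mat"
  assumes Bm: "Bm \<in> carrier_mat n k" and c: "c \<in> carrier_vec k"
    and orth: "\<And>l j. l < k \<Longrightarrow> j < k \<Longrightarrow> l \<noteq> j \<Longrightarrow> col Bm l \<bullet> col Bm j = 0"
  shows "\<And>l. l < k \<Longrightarrow> col Bm l \<bullet> (Bm *\<^sub>v c) = (col Bm l \<bullet> col Bm l) * c $ l"
    and "(Bm *\<^sub>v c) \<bullet> (Bm *\<^sub>v c) = (\<Sum>l<k. (col Bm l \<bullet> col Bm l) * (c $ l)\<^sup>2)"
proof -
  show coord: "col Bm l \<bullet> (Bm *\<^sub>v c) = (col Bm l \<bullet> col Bm l) * c $ l" if l: "l < k" for l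
  proof -
    have "col Bm l \<bullet> (Bm *\<^sub>v c) = (\<Sum>i<n. \<Sum>j<k. c $ j * (Bm $$ (i, l) * Bm $$ (i, j)))"
      using Bm c l by (simp add: scalar_prod_def lessThan_atLeast0 sum_distrib_left ac_simps)
    also have "\<dots> = (\<Sum>j<k. c $ j * (col Bm l \<bullet> col Bm j))"
      using Bm l by (subst sum.swap) (simp add: scalar_prod_def lessThan_atLeast0 sum_distrib_left)
    also have "\<dots> = (\<Sum>j<k. if j = l then c $ l * (col Bm l \<bullet> col Bm l) else 0)"
      using orth l by (intro sum.cong) auto
    finally show ?thesis using l by simp
  qed
  have "(Bm *\<^sub>v c) \<bullet> (Bm *\<^sub>v c) = (transpose_mat Bm *\<^sub>v (Bm *\<^sub>v c)) \<bullet> c"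
    using transpose_vec_mult_scalar[OF Bm c] Bm c by simp
  also have "\<dots> = (\<Sum>l<k. (col Bm l \<bullet> (Bm *\<^sub>v c)) * c $ l)"
    using Bm c by (simp add: scalar_prod_def[of _ c] lessThan_atLeast0)
  finally show "(Bm *\<^sub>v c) \<bullet> (Bm *\<^sub>v c) = (\<Sum>l<k. (col Bm l \<bullet> col Bm l) * (c $ l)\<^sup>2)"
    by (simp add: coord power2_eq_square ac_simps)
qed

lemma num_eigs_ge_orthogonal_columns:
  fixes A Bm :: "real mat"
  assumes A: "A \<in> carrier_mat n n" and sym: "transpose_mat A = A" and Bm: "Bm \<in> carrier_mat n k"
    and orth: "\<And>l j. l < k \<Longrightarrow> j < k \<Longrightarrow> l \<noteq> j \<Longrightarrow> col Bm l \<bullet> col Bm j = 0"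
    and norm: "\<And>l. l < k \<Longrightarrow> t \<le> col Bm l \<bullet> col Bm l" and t: "0 < t"
    and dominated: "\<And>x. x \<in> carrier_vec n \<Longrightarrow> (\<Sum>l<k. (col Bm l \<bullet> x)\<^sup>2) \<le> x \<bullet> (A *\<^sub>v x)"
  shows "k \<le> num_eigs_ge A t"
proof (rule num_eigs_ge_lower_bound[OF A sym Bm])
  fix c :: "real vec" assume c: "c \<in> carrier_vec k" "c \<noteq> 0\<^sub>v k"
  define x where "x = Bm *\<^sub>v c"
  define N where "N l = col Bm l \<bullet> col Bm l" for l
  have x: "x \<in> carrier_vec n" unfolding x_def using Bm c by simp
  have coord: "col Bm l \<bullet> x = N l * c $ l" if "l < k" for l
    using orthogonal_columns_mult_vec(1)[OF Bm c(1) orth that] unfolding x_def N_def .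
  have xx: "x \<bullet> x = (\<Sum>l<k. N l * (c $ l)\<^sup>2)"
    using orthogonal_columns_mult_vec(2)[OF Bm c(1) orth] unfolding x_def N_def .
  have N_pos: "0 < N l" if "l < k" for l using norm[OF that] t unfolding N_def by simp
  obtain a where a: "a < k" "c $ a \<noteq> 0"
    using c by (metis carrier_vecD eq_vecI index_zero_vec(1,2))
  have "0 < (\<Sum>l<k. N l * (c $ l)\<^sup>2)"
    using a N_pos by (intro sum_pos2[of _ a]) (auto intro!: mult_nonneg_nonneg simp: less_imp_le)
  hence "x \<noteq> 0\<^sub>v n" using xx by auto
  moreover have "t * (x \<bullet> x) \<le> (\<Sum>l<k. (col Bm l \<bullet> x)\<^sup>2)"
    unfolding xx sum_distrib_left
  proof (rule sum_mono)
    fix l assume l: "l \<in> {..<k}"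
    hence "t * N l \<le> N l * N l"
      using norm N_pos unfolding N_def by (intro mult_right_mono) (auto simp: less_imp_le)
    hence "t * N l * (c $ l)\<^sup>2 \<le> N l * N l * (c $ l)\<^sup>2" by (simp add: mult_right_mono)
    thus "t * (N l * (c $ l)\<^sup>2) \<le> (col Bm l \<bullet> x)\<^sup>2"
      using l coord by (simp add: power2_eq_square ac_simps)
  qed
  ultimately show "Bm *\<^sub>v c \<noteq> 0\<^sub>v n \<and> t * ((Bm *\<^sub>v c) \<bullet> (Bm *\<^sub>v c)) \<le> (Bm *\<^sub>v c) \<bullet> (A *\<^sub>v (Bm *\<^sub>v c))"
    using dominated[OF x] unfolding x_def by simp
qed

section \<open>The Helmholtzian as a sum of Gram matrices\<close>

lemma oriented_simple_graphD:
  assumes "oriented_simple_graph V D"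
  shows "finite V" and "\<And>e. e \<in> D \<Longrightarrow> fst e \<in> V \<and> snd e \<in> V" and "\<And>e. e \<in> D \<Longrightarrow> fst e \<noteq> snd e"
    and "\<And>u v. (u, v) \<in> D \<Longrightarrow> (v, u) \<notin> D" and "finite D"
  using assms finite_subset[of D "V \<times> V"] unfolding oriented_simple_graph_def by auto

definition triangles :: "'a set \<Rightarrow> ('a \<times> 'a) set \<Rightarrow> 'a set set" where
  "triangles V D = {T. is_triangle V D T}"

lemma finite_triangles: "finite V \<Longrightarrow> finite (triangles V D)"
  by (rule finite_subset[of _ "Pow V"]) (auto simp: triangles_def is_triangle_def is_clique_def)

lemma card_ends: "fst e \<noteq> snd e \<Longrightarrow> card (ends e) = 2"
  by (cases e) (simp add: ends_def)

lemma adj_imp_arc: "adj D u v \<Longrightarrow> \<exists>e\<in>D. ends e = {u, v}"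
  unfolding adj_def ends_def by (auto intro: bexI[of _ "(u, v)"] bexI[of _ "(v, u)"] simp: insert_commute)

definition vertex_incidence :: "'a \<Rightarrow> 'a \<times> 'a \<Rightarrow> real" where
  "vertex_incidence v e = (if v = snd e then 1 else if v = fst e then -1 else 0)"

definition cyclic_sign :: "'a \<Rightarrow> 'a \<Rightarrow> 'a \<Rightarrow> 'a \<times> 'a \<Rightarrow> real" where
  "cyclic_sign a b c e =
     (if e \<in> {(a, b), (b, c), (c, a)} then 1 else if e \<in> {(b, a), (c, b), (a, c)} then -1 else 0)"

text \<open>An arbitrary orientation of each triangle; products of two incidences do not depend on it.\<close>
definition cyclic_order :: "'a set \<Rightarrow> 'a \<times> 'a \<times> 'a" where
  "cyclic_order T = (SOME (a, b, c). T = {a, b, c} \<and> a \<noteq> b \<and> b \<noteq> c \<and> a \<noteq> c)"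

definition triangle_incidence :: "'a set \<Rightarrow> 'a \<times> 'a \<Rightarrow> real" where
  "triangle_incidence T e = (case cyclic_order T of (a, b, c) \<Rightarrow> cyclic_sign a b c e)"

lemma cyclic_orderE:
  assumes "card T = 3"
  obtains a b c where "cyclic_order T = (a, b, c)" "T = {a, b, c}" "a \<noteq> b" "b \<noteq> c" "a \<noteq> c"
proof -
  obtain a b c where "T = {a, b, c}" "a \<noteq> b" "b \<noteq> c" "a \<noteq> c"
    using assms by (auto simp: card_3_iff)
  hence "\<exists>x. case x of (a, b, c) \<Rightarrow> T = {a, b, c} \<and> a \<noteq> b \<and> b \<noteq> c \<and> a \<noteq> c" by blast
  hence "case cyclic_order T of (a, b, c) \<Rightarrow> T = {a, b, c} \<and> a \<noteq> b \<and> b \<noteq> c \<and> a \<noteq> c"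
    unfolding cyclic_order_def by (rule someI_ex)
  thus ?thesis using that by (cases "cyclic_order T") auto
qed

lemma triangle_incidence_square:
  assumes "card T = 3" "fst e \<noteq> snd e"
  shows "triangle_incidence T e * triangle_incidence T e = (if ends e \<subseteq> T then 1 else 0)"
proof -
  obtain a b c where "cyclic_order T = (a, b, c)" "T = {a, b, c}" "a \<noteq> b" "b \<noteq> c" "a \<noteq> c"
    using cyclic_orderE[OF assms(1)] .
  thus ?thesis using assms(2) by (cases e) (auto simp: triangle_incidence_def cyclic_sign_def ends_def)
qed

lemma triangle_incidence_nonzero:
  assumes "card T = 3" "triangle_incidence T e \<noteq> 0"
  shows "ends e \<subseteq> T"
proof -
  obtain a b c where "cyclic_order T = (a, b, c)" "T = {a, b, c}" "a \<noteq> b" "b \<noteq> c" "a \<noteq> c"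
    using cyclic_orderE[OF assms(1)] .
  thus ?thesis using assms(2)
    by (cases e) (auto simp: triangle_incidence_def cyclic_sign_def ends_def split: if_splits)
qed

lemma triangle_incidence_orthogonal:
  assumes "card T = 3" "card T' = 3" "card (T \<inter> T') \<le> 1" "fst e \<noteq> snd e"
  shows "triangle_incidence T e * triangle_incidence T' e = 0"
proof (rule ccontr)
  assume "triangle_incidence T e * triangle_incidence T' e \<noteq> 0"
  hence "ends e \<subseteq> T \<inter> T'"
    using triangle_incidence_nonzero[OF assms(1)] triangle_incidence_nonzero[OF assms(2)] by auto
  hence "card (ends e) \<le> card (T \<inter> T')"
    using card.infinite[of T] assms(1) by (intro card_mono) auto
  thus False using assms(3,4) card_ends by fastforce
qed

lemma vertex_incidence_sum:
  assumes "finite V" "fst e \<in> V" "snd e \<in> V" "fst e \<noteq> snd e"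
  shows "(\<Sum>v\<in>V. vertex_incidence v e * g v) = g (snd e) - g (fst e)"
proof -
  have "(\<Sum>v\<in>V. vertex_incidence v e * g v) = (\<Sum>v\<in>{fst e, snd e}. vertex_incidence v e * g v)"
    using assms by (intro sum.mono_neutral_right) (auto simp: vertex_incidence_def)
  thus ?thesis using assms(4) by (simp add: vertex_incidence_def)
qed

lemma vertex_incidence_cyclic_sign_cancel:
  assumes "a \<noteq> b" "b \<noteq> c" "a \<noteq> c"
    and "p \<in> {a, b, c}" "q \<in> {a, b, c}" "p' \<in> {a, b, c}" "q' \<in> {a, b, c}"
    and "p \<noteq> q" "p' \<noteq> q'" "(p, q) \<noteq> (p', q')" "(p', q') \<noteq> (q, p)"
  shows "vertex_incidence q (p', q') - vertex_incidence p (p', q')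
    + cyclic_sign a b c (p, q) * cyclic_sign a b c (p', q') = 0"
  using assms(4-7) by (elim insertE emptyE)
    (use assms(1-3,8-11) in \<open>simp_all add: vertex_incidence_def cyclic_sign_def\<close>)

lemma vertex_incidence_triangle_incidence_cancel:
  assumes T: "card T = 3" and ends: "ends (p, q) \<subseteq> T" "ends (p', q') \<subseteq> T"
    and "p \<noteq> q" "p' \<noteq> q'" "(p, q) \<noteq> (p', q')" "(p', q') \<noteq> (q, p)"
  shows "vertex_incidence q (p', q') - vertex_incidence p (p', q')
    + triangle_incidence T (p, q) * triangle_incidence T (p', q') = 0"
proof -
  obtain a b c where abc: "cyclic_order T = (a, b, c)" "T = {a, b, c}" "a \<noteq> b" "b \<noteq> c" "a \<noteq> c"
    using cyclic_orderE[OF T] .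
  show ?thesis
    unfolding triangle_incidence_def abc(1) prod.case
    by (rule vertex_incidence_cyclic_sign_cancel) (use abc ends assms(4-7) in \<open>auto simp: ends_def\<close>)
qed

lemma vertex_incidence_arc_relation:
  assumes "p \<noteq> q" "p' \<noteq> q'" "(p, q) \<noteq> (p', q')" "(p', q') \<noteq> (q, p)"
  shows "vertex_incidence q (p', q') - vertex_incidence p (p', q') =
    (if head_tail (p, q) (p', q') then -1 else if same_end (p, q) (p', q') then 1 else 0)"
  using assms unfolding vertex_incidence_def head_tail_def same_end_def by auto

context
  fixes V :: "'a set" and D :: "('a \<times> 'a) set"
  assumes G: "oriented_simple_graph V D"
begin

lemma sum_triangle_incidence_square:
  assumes e: "e \<in> D"
  shows "(\<Sum>T\<in>triangles V D. triangle_incidence T e * triangle_incidence T e) = real (num_tri V D e)"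
proof -
  have "(\<Sum>T\<in>triangles V D. triangle_incidence T e * triangle_incidence T e) =
      (\<Sum>T\<in>triangles V D. if ends e \<subseteq> T then 1 else 0)"
    using oriented_simple_graphD(3)[OF G e]
    by (intro sum.cong) (auto simp: triangle_incidence_square triangles_def is_triangle_def)
  also have "\<dots> = real (card {T \<in> triangles V D. ends e \<subseteq> T})"
    using finite_triangles[OF oriented_simple_graphD(1)[OF G]] by (simp add: sum.If_cases Int_def)
  finally show ?thesis unfolding num_tri_def triangles_def by simp
qed

lemma triangle_through_two_arcs:
  assumes e: "e \<in> D" and e': "e' \<in> D" and ne: "e \<noteq> e'"
    and T: "T \<in> triangles V D" "ends e \<subseteq> T" "ends e' \<subseteq> T"
  shows "T = ends e \<union> ends e'"
proof -
  have card2: "card (ends e) = 2" "card (ends e') = 2"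
    using card_ends[OF oriented_simple_graphD(3)[OF G e]] card_ends[OF oriented_simple_graphD(3)[OF G e']] .
  moreover have "ends e \<noteq> ends e'"
    using ne oriented_simple_graphD(4)[OF G] e e' by (cases e, cases e') (auto simp: ends_def doubleton_eq_iff)
  ultimately have "\<not> ends e' \<subseteq> ends e" by (metis card_subset_eq finite.emptyI finite.insertI ends_def)
  hence "card (ends e) < card (ends e \<union> ends e')" by (intro psubset_card_mono) (auto simp: ends_def)
  moreover have "card T = 3" using T(1) by (simp add: triangles_def is_triangle_def)
  ultimately have "card T \<le> card (ends e \<union> ends e')" using card2 by simp
  moreover have "finite T" using \<open>card T = 3\<close> card.infinite by fastforce
  ultimately show ?thesis using T(2,3) by (intro card_seteq[symmetric]) auto
qed

lemma sum_triangle_incidence_common: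
  assumes e: "e \<in> D" and e': "e' \<in> D" and ne: "e \<noteq> e'"
    and T0: "T0 \<in> triangles V D" "ends e \<subseteq> T0" "ends e' \<subseteq> T0"
  shows "(\<Sum>T\<in>triangles V D. triangle_incidence T e * triangle_incidence T e') =
    triangle_incidence T0 e * triangle_incidence T0 e'"
proof -
  have "triangle_incidence T e * triangle_incidence T e' = 0" if T: "T \<in> triangles V D - {T0}" for T
  proof (rule ccontr)
    have card: "card T = 3" using T by (simp add: triangles_def is_triangle_def)
    assume "triangle_incidence T e * triangle_incidence T e' \<noteq> 0"
    hence "ends e \<subseteq> T" "ends e' \<subseteq> T"
      using triangle_incidence_nonzero[OF card, of e] triangle_incidence_nonzero[OF card, of e'] by auto
    hence "T = T0"
      using T triangle_through_two_arcs[OF e e' ne] T0 by blast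
    thus False using T by simp
  qed
  hence "(\<Sum>T\<in>triangles V D. triangle_incidence T e * triangle_incidence T e') =
      (\<Sum>T\<in>{T0}. triangle_incidence T e * triangle_incidence T e')"
    using finite_triangles[OF oriented_simple_graphD(1)[OF G]] T0(1)
    by (intro sum.mono_neutral_right) auto
  thus ?thesis by simp
qed

lemma sum_triangle_incidence_no_common:
  assumes "e \<noteq> e'" "\<not> in_common_tri V D e e'"
  shows "(\<Sum>T\<in>triangles V D. triangle_incidence T e * triangle_incidence T e') = 0"
proof (rule sum.neutral, rule ballI, rule ccontr)
  fix T assume T: "T \<in> triangles V D" and "triangle_incidence T e * triangle_incidence T e' \<noteq> 0"
  moreover have card: "card T = 3" using T by (simp add: triangles_def is_triangle_def)
  ultimately have "ends e \<subseteq> T" "ends e' \<subseteq> T"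
    using triangle_incidence_nonzero[OF card, of e] triangle_incidence_nonzero[OF card, of e'] by auto
  thus False using assms T unfolding in_common_tri_def triangles_def by auto
qed

lemma helm_entry_eq_incidence_products:
  assumes e: "e \<in> D" and e': "e' \<in> D"
  shows "helm_entry V D e e' = (\<Sum>v\<in>V. vertex_incidence v e * vertex_incidence v e')
    + (\<Sum>T\<in>triangles V D. triangle_incidence T e * triangle_incidence T e')"
proof -
  obtain p q p' q' where pq: "e = (p, q)" "e' = (p', q')" by (cases e, cases e')
  have pq_ne: "p \<noteq> q" "p' \<noteq> q'"
    using oriented_simple_graphD(3)[OF G e] oriented_simple_graphD(3)[OF G e'] pq by auto
  have vertex_sum: "(\<Sum>v\<in>V. vertex_incidence v e * vertex_incidence v e') =
      vertex_incidence q e' - vertex_incidence p e'"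
    using vertex_incidence_sum[OF oriented_simple_graphD(1)[OF G]] oriented_simple_graphD(2,3)[OF G e] pq
    by simp
  show ?thesis
  proof (cases "e = e'")
    case True
    thus ?thesis using vertex_sum sum_triangle_incidence_square[OF e] pq pq_ne
      by (simp add: helm_entry_def vertex_incidence_def)
  next
    case ne: False
    have not_rev: "(p', q') \<noteq> (q, p)" using oriented_simple_graphD(4)[OF G] e e' pq by auto
    show ?thesis
    proof (cases "in_common_tri V D e e'")
      case True
      then obtain T0 where T0: "T0 \<in> triangles V D" "ends e \<subseteq> T0" "ends e' \<subseteq> T0"
        unfolding in_common_tri_def triangles_def by auto
      have "card T0 = 3" using T0(1) by (simp add: triangles_def is_triangle_def)
      hence "vertex_incidence q e' - vertex_incidence p e'
          + triangle_incidence T0 e * triangle_incidence T0 e' = 0"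
        using T0 pq_ne ne not_rev unfolding pq by (intro vertex_incidence_triangle_incidence_cancel) auto
      thus ?thesis
        using True ne vertex_sum sum_triangle_incidence_common[OF e e' ne T0]
        by (simp add: helm_entry_def)
    next
      case False
      thus ?thesis
        using ne vertex_sum sum_triangle_incidence_no_common[OF ne False]
          vertex_incidence_arc_relation[OF pq_ne _ not_rev] pq
        by (simp add: helm_entry_def)
    qed
  qed
qed

end

lemma helm_entry_commute: "helm_entry V D e e' = helm_entry V D e' e"
proof -
  have "in_common_tri V D e e' = in_common_tri V D e' e" "head_tail e e' = head_tail e' e"
    "same_end e e' = same_end e' e"
    unfolding in_common_tri_def head_tail_def same_end_def by auto
  thus ?thesis unfolding helm_entry_def by auto
qed

lemma helmholtzian_carrier: "helmholtzian V D es \<in> carrier_mat (length es) (length es)"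
  by (simp add: helmholtzian_def)

lemma helmholtzian_symmetric: "transpose_mat (helmholtzian V D es) = helmholtzian V D es"
  by (rule eq_matI) (auto simp: helmholtzian_def helm_entry_commute)

lemma sum_quadratic_form_gram:
  fixes f :: "'k \<Rightarrow> nat \<Rightarrow> real"
  assumes "finite K"
  shows "(\<Sum>i<m. x i * (\<Sum>j<m. (\<Sum>k\<in>K. f k i * f k j) * x j)) = (\<Sum>k\<in>K. (\<Sum>i<m. f k i * x i)\<^sup>2)"
proof -
  have "(\<Sum>i<m. x i * (\<Sum>j<m. (\<Sum>k\<in>K. f k i * f k j) * x j)) =
      (\<Sum>i<m. \<Sum>j<m. \<Sum>k\<in>K. (f k i * x i) * (f k j * x j))"
    by (simp add: sum_distrib_left sum_distrib_right ac_simps)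
  also have "\<dots> = (\<Sum>i<m. \<Sum>k\<in>K. \<Sum>j<m. (f k i * x i) * (f k j * x j))"
    by (intro sum.cong refl sum.swap)
  also have "\<dots> = (\<Sum>k\<in>K. \<Sum>i<m. \<Sum>j<m. (f k i * x i) * (f k j * x j))"
    by (rule sum.swap)
  also have "\<dots> = (\<Sum>k\<in>K. (\<Sum>i<m. f k i * x i)\<^sup>2)"
    by (simp add: power2_eq_square sum_product)
  finally show ?thesis .
qed

lemma helmholtzian_quadratic_form:
  assumes G: "oriented_simple_graph V D" and es: "set es \<subseteq> D" and x: "x \<in> carrier_vec (length es)"
  shows "x \<bullet> (helmholtzian V D es *\<^sub>v x) =
    (\<Sum>v\<in>V. (\<Sum>i<length es. vertex_incidence v (es ! i) * x $ i)\<^sup>2)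
    + (\<Sum>T\<in>triangles V D. (\<Sum>i<length es. triangle_incidence T (es ! i) * x $ i)\<^sup>2)"
proof -
  let ?m = "length es" and ?H = "helmholtzian V D es"
  have entry: "?H $$ (i, j) = (\<Sum>v\<in>V. vertex_incidence v (es ! i) * vertex_incidence v (es ! j))
      + (\<Sum>T\<in>triangles V D. triangle_incidence T (es ! i) * triangle_incidence T (es ! j))"
    if "i < ?m" "j < ?m" for i j
  proof -
    have "es ! i \<in> D" "es ! j \<in> D" using that es nth_mem by blast+
    thus ?thesis using that by (simp add: helmholtzian_def helm_entry_eq_incidence_products[OF G])
  qed
  have "x \<bullet> (?H *\<^sub>v x) = (\<Sum>i<?m. x $ i * (\<Sum>j<?m. ?H $$ (i, j) * x $ j))"
    using x helmholtzian_carrier[of V D es] by (simp add: scalar_prod_def lessThan_atLeast0)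
  also have "\<dots> =
      (\<Sum>i<?m. x $ i * (\<Sum>j<?m. (\<Sum>v\<in>V. vertex_incidence v (es ! i) * vertex_incidence v (es ! j)) * x $ j))
      + (\<Sum>i<?m. x $ i * (\<Sum>j<?m. (\<Sum>T\<in>triangles V D.
          triangle_incidence T (es ! i) * triangle_incidence T (es ! j)) * x $ j))"
    by (simp add: entry distrib_left distrib_right sum.distrib)
  also have "\<dots> = (\<Sum>v\<in>V. (\<Sum>i<?m. vertex_incidence v (es ! i) * x $ i)\<^sup>2)
      + (\<Sum>T\<in>triangles V D. (\<Sum>i<?m. triangle_incidence T (es ! i) * x $ i)\<^sup>2)"
    using sum_quadratic_form_gram[OF oriented_simple_graphD(1)[OF G],
        where f = "\<lambda>v i. vertex_incidence v (es ! i)" and x = "\<lambda>i. x $ i" and m = ?m]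
      sum_quadratic_form_gram[OF finite_triangles[OF oriented_simple_graphD(1)[OF G]],
        where f = "\<lambda>T i. triangle_incidence T (es ! i)" and x = "\<lambda>i. x $ i" and m = ?m]
    by simp
  finally show ?thesis .
qed

lemma helmholtzian_quadratic_form_ge:
  assumes G: "oriented_simple_graph V D" and es: "set es \<subseteq> D" and x: "x \<in> carrier_vec (length es)"
    and S: "S \<subseteq> triangles V D"
  shows "(\<Sum>T\<in>S. (\<Sum>i<length es. triangle_incidence T (es ! i) * x $ i)\<^sup>2)
    \<le> x \<bullet> (helmholtzian V D es *\<^sub>v x)"
proof -
  have "(\<Sum>T\<in>S. (\<Sum>i<length es. triangle_incidence T (es ! i) * x $ i)\<^sup>2)
      \<le> (\<Sum>T\<in>triangles V D. (\<Sum>i<length es. triangle_incidence T (es ! i) * x $ i)\<^sup>2)"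
    using finite_triangles[OF oriented_simple_graphD(1)[OF G]] S by (intro sum_mono2) auto
  moreover have "0 \<le> (\<Sum>v\<in>V. (\<Sum>i<length es. vertex_incidence v (es ! i) * x $ i)\<^sup>2)"
    by (intro sum_nonneg) auto
  ultimately show ?thesis unfolding helmholtzian_quadratic_form[OF G es x] by linarith
qed

section \<open>Eigenvalues from edge-disjoint triangles\<close>

lemma sum_nth_distinct_list: "distinct xs \<Longrightarrow> (\<Sum>i<length xs. g (xs ! i)) = (\<Sum>x\<in>set xs. g x)"
  by (simp add: sum.distinct_set_conv_list sum_list_sum_nth atLeast0LessThan)

lemma three_le_sum_triangle_incidence_square:
  assumes G: "oriented_simple_graph V D" and T: "T \<in> triangles V D"
  shows "3 \<le> (\<Sum>e\<in>D. triangle_incidence T e * triangle_incidence T e)"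
proof -
  have card_T: "card T = 3" and clique: "is_clique V D T"
    using T by (auto simp: triangles_def is_triangle_def)
  note finD = oriented_simple_graphD(5)[OF G]
  obtain a b c where abc: "T = {a, b, c}" "a \<noteq> b" "b \<noteq> c" "a \<noteq> c"
    using card_T by (auto simp: card_3_iff)
  have "adj D a b" "adj D b c" "adj D a c" using clique abc unfolding is_clique_def by auto
  then obtain e1 e2 e3 where e: "e1 \<in> D" "ends e1 = {a, b}" "e2 \<in> D" "ends e2 = {b, c}"
    "e3 \<in> D" "ends e3 = {a, c}"
    using adj_imp_arc by metis
  have "e1 \<noteq> e2" "e1 \<noteq> e3" "e2 \<noteq> e3" using e abc by (auto simp: doubleton_eq_iff)
  hence "3 = card {e1, e2, e3}" by simp
  also have "\<dots> \<le> card {e \<in> D. ends e \<subseteq> T}"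
    using e abc finD by (intro card_mono) auto
  finally have "3 \<le> card {e \<in> D. ends e \<subseteq> T}" .
  also have "real (card {e \<in> D. ends e \<subseteq> T}) = (\<Sum>e\<in>D. if ends e \<subseteq> T then 1 else 0)"
    using finD by (simp add: sum.If_cases Int_def)
  also have "\<dots> = (\<Sum>e\<in>D. triangle_incidence T e * triangle_incidence T e)"
    by (intro sum.cong refl)
      (simp add: triangle_incidence_square[OF card_T oriented_simple_graphD(3)[OF G]])
  finally show ?thesis by simp
qed

lemma sum_triangle_incidence_products_eq_0:
  assumes G: "oriented_simple_graph V D" and es: "set es \<subseteq> D"
    and T: "card T = 3" "card T' = 3" "card (T \<inter> T') \<le> 1"
  shows "(\<Sum>i<length es. triangle_incidence T (es ! i) * triangle_incidence T' (es ! i)) = 0"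
proof (rule sum.neutral, rule ballI)
  fix i assume "i \<in> {..<length es}"
  hence "es ! i \<in> D" using es nth_mem by auto
  thus "triangle_incidence T (es ! i) * triangle_incidence T' (es ! i) = 0"
    by (intro triangle_incidence_orthogonal[OF T] oriented_simple_graphD(3)[OF G])
qed

lemma num_eigs_ge_3_triangle_packing:
  assumes G: "oriented_simple_graph V D" and dis: "distinct es" and es: "set es = D"
    and S: "S \<subseteq> triangles V D" "finite S" and packing: "pairwise (\<lambda>T T'. card (T \<inter> T') \<le> 1) S"
  shows "card S \<le> num_eigs_ge (helmholtzian V D es) 3"
proof -
  obtain Ts where Ts: "distinct Ts" "set Ts = S" using finite_distinct_list[OF S(2)] by blast
  let ?m = "length es" and ?k = "length Ts"
  define Bm where "Bm = mat ?m ?k (\<lambda>(i, l). triangle_incidence (Ts ! l) (es ! i))"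
  have Bm: "Bm \<in> carrier_mat ?m ?k" unfolding Bm_def by simp
  have col: "col Bm l \<bullet> y = (\<Sum>i<?m. triangle_incidence (Ts ! l) (es ! i) * y $ i)"
    if "l < ?k" "y \<in> carrier_vec ?m" for l y
    using that by (simp add: Bm_def scalar_prod_def lessThan_atLeast0)
  have Ts_tri: "Ts ! l \<in> triangles V D" "card (Ts ! l) = 3" if "l < ?k" for l
    using that Ts S(1) nth_mem by (auto simp: triangles_def is_triangle_def)
  have "?k \<le> num_eigs_ge (helmholtzian V D es) 3"
  proof (rule num_eigs_ge_orthogonal_columns[OF helmholtzian_carrier helmholtzian_symmetric Bm])
    fix l j assume lj: "l < ?k" "j < ?k" "l \<noteq> j"
    have "Ts ! l \<noteq> Ts ! j" using nth_eq_iff_index_eq[OF Ts(1)] lj by simp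
    moreover have "Ts ! l \<in> S" "Ts ! j \<in> S" using Ts lj by auto
    ultimately have "card (Ts ! l \<inter> Ts ! j) \<le> 1" using packing unfolding pairwise_def by blast
    hence "(\<Sum>i<?m. triangle_incidence (Ts ! l) (es ! i) * triangle_incidence (Ts ! j) (es ! i)) = 0"
      using es by (intro sum_triangle_incidence_products_eq_0[OF G _ Ts_tri(2)[OF lj(1)] Ts_tri(2)[OF lj(2)]])
        simp_all
    thus "col Bm l \<bullet> col Bm j = 0" using lj col[of l "col Bm j"] Bm by (simp add: Bm_def)
  next
    fix l assume l: "l < ?k"
    have "col Bm l \<bullet> col Bm l = (\<Sum>e\<in>D. triangle_incidence (Ts ! l) e * triangle_incidence (Ts ! l) e)"
      using l Bm col[of l "col Bm l"] sum_nth_distinct_list[OF dis] es by (simp add: Bm_def)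
    thus "3 \<le> col Bm l \<bullet> col Bm l"
      using three_le_sum_triangle_incidence_square[OF G Ts_tri(1)[OF l]] by simp
  next
    fix x :: "real vec" assume x: "x \<in> carrier_vec ?m"
    have "(\<Sum>l<?k. (col Bm l \<bullet> x)\<^sup>2) = (\<Sum>T\<in>S. (\<Sum>i<?m. triangle_incidence T (es ! i) * x $ i)\<^sup>2)"
      using col[OF _ x] sum_nth_distinct_list[OF Ts(1)] Ts(2) by simp
    also have "\<dots> \<le> x \<bullet> (helmholtzian V D es *\<^sub>v x)"
      using helmholtzian_quadratic_form_ge[OF G _ x S(1)] es by simp
    finally show "(\<Sum>l<?k. (col Bm l \<bullet> x)\<^sup>2) \<le> x \<bullet> (helmholtzian V D es *\<^sub>v x)" .
  qed simp
  thus ?thesis using distinct_card[OF Ts(1)] Ts(2) by simp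
qed

section \<open>Triple packings in a clique\<close>

lemma triple_meeting_in_two_eq_insert:
  assumes T: "finite T" "card T = 3" and T': "card T' = 3" "2 \<le> card (T \<inter> T')" "T' \<noteq> T"
  obtains z where "z \<in> T' - T" "T' = insert z (T \<inter> T')" "card (T \<inter> T') = 2"
proof -
  have fin_T': "finite T'" using T'(1) card.infinite by fastforce
  have "card (T \<inter> T') \<noteq> 3"
  proof
    assume three: "card (T \<inter> T') = 3"
    have "T \<inter> T' = T" using card_subset_eq[OF T(1), of "T \<inter> T'"] T(2) three by simp
    moreover have "T \<inter> T' = T'" using card_subset_eq[OF fin_T', of "T \<inter> T'"] T'(1) three by simp
    ultimately show False using T'(3) by simp
  qed
  moreover have "card (T \<inter> T') \<le> 3" using card_mono[OF T(1), of "T \<inter> T'"] T(2) by simp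
  ultimately have card_p: "card (T \<inter> T') = 2" using T'(2) by linarith
  hence "card (T' - T) = 1" using card_Diff_subset_Int[of T' T] fin_T' T'(1) by (simp add: Int_commute)
  then obtain z where "T' - T = {z}" by (rule card_1_singletonE)
  hence "z \<in> T' - T" "T' = insert z (T \<inter> T')" by blast+
  thus ?thesis using card_p by (rule that)
qed

lemma card_triples_meeting_in_two_le:
  assumes C: "finite C" and T: "T \<subseteq> C" "card T = 3"
  shows "card {T'. (T' \<subseteq> C \<and> card T' = 3) \<and> 2 \<le> card (T \<inter> T')} \<le> 1 + 3 * (card C - 3)"
proof -
  define pairs where "pairs = {p. p \<subseteq> T \<and> card p = 2}"
  \<comment> \<open>Besides T itself, each such T' is a pair of T plus a point of C - T.\<close>
  define X where "X = (\<Union>p\<in>pairs. (\<lambda>z. insert z p) ` (C - T))"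
  have fin_T: "finite T" using C T finite_subset by blast
  have cover: "{T'. (T' \<subseteq> C \<and> card T' = 3) \<and> 2 \<le> card (T \<inter> T')} \<subseteq> insert T X"
  proof
    fix T' assume "T' \<in> {T'. (T' \<subseteq> C \<and> card T' = 3) \<and> 2 \<le> card (T \<inter> T')}"
    hence T': "T' \<subseteq> C" "card T' = 3" "2 \<le> card (T \<inter> T')" by auto
    show "T' \<in> insert T X"
    proof (cases "T' = T")
      case False
      then obtain z where "z \<in> T' - T" "T' = insert z (T \<inter> T')" "card (T \<inter> T') = 2"
        using triple_meeting_in_two_eq_insert[OF fin_T T(2) T'(2,3)] by blast
      moreover have "T \<inter> T' \<in> pairs" using \<open>card (T \<inter> T') = 2\<close> unfolding pairs_def by simp
      ultimately show ?thesis using T'(1) unfolding X_def by blast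
    qed simp
  qed
  have card_X: "card X \<le> 3 * (card C - 3)"
  proof -
    have "card pairs = 3" unfolding pairs_def using n_subsets[OF fin_T, of 2] T by (simp add: choose_two)
    have "card X \<le> (\<Sum>p\<in>pairs. card ((\<lambda>z. insert z p) ` (C - T)))"
      unfolding X_def by (rule card_UN_le) (use fin_T in \<open>simp add: pairs_def\<close>)
    also have "\<dots> \<le> (\<Sum>p\<in>pairs. card (C - T))" by (rule sum_mono) (rule card_image_le, use C in simp)
    also have "\<dots> = 3 * (card C - 3)"
      using \<open>card pairs = 3\<close> card_Diff_subset[OF fin_T T(1)] T by simp
    finally show ?thesis .
  qed
  have "finite X" unfolding X_def pairs_def using fin_T C by simp
  hence "card {T'. (T' \<subseteq> C \<and> card T' = 3) \<and> 2 \<le> card (T \<inter> T')} \<le> card (insert T X)"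
    using cover by (intro card_mono) simp_all
  also have "\<dots> \<le> Suc (card X)" by (rule card_insert_le_m1) simp_all
  finally show ?thesis using card_X by simp
qed

lemma large_triple_packing_exists:
  assumes C: "finite C"
  obtains S where "S \<subseteq> {T. T \<subseteq> C \<and> card T = 3}" "pairwise (\<lambda>T T'. card (T \<inter> T') \<le> 1) S"
    and "card C choose 3 \<le> card S * (1 + 3 * (card C - 3))"
proof -
  define triples where "triples = {T. T \<subseteq> C \<and> card T = 3}"
  define packings where "packings = {S. S \<subseteq> triples \<and> pairwise (\<lambda>T T'. card (T \<inter> T') \<le> 1) S}"
  have "finite packings" unfolding packings_def triples_def using C by simp
  moreover have "{} \<in> packings" unfolding packings_def by simp
  ultimately obtain S where S: "S \<in> packings" and S_max: "\<And>S'. S' \<in> packings \<Longrightarrow> S \<subseteq> S' \<Longrightarrow> S' = S"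
    using finite_has_maximal[of packings] by blast
  have fin_S: "finite S" using S C unfolding packings_def triples_def by (auto intro: finite_subset)
  define meeting where "meeting T = {T'. (T' \<subseteq> C \<and> card T' = 3) \<and> 2 \<le> card (T \<inter> T')}" for T
  \<comment> \<open>By maximality every triple meets some member of S in at least two points.\<close>
  have "triples \<subseteq> (\<Union>T\<in>S. meeting T)"
  proof
    fix T0 assume T0: "T0 \<in> triples"
    show "T0 \<in> (\<Union>T\<in>S. meeting T)"
    proof (rule ccontr)
      assume "T0 \<notin> (\<Union>T\<in>S. meeting T)"
      hence small: "card (T \<inter> T0) \<le> 1" if "T \<in> S" for T
        using that T0 unfolding meeting_def triples_def by fastforce
      hence "T0 \<notin> S" using T0 unfolding triples_def by fastforce
      moreover have "insert T0 S \<in> packings"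
        using S T0 small unfolding packings_def pairwise_def by (auto simp: Int_commute)
      ultimately show False using S_max by blast
    qed
  qed
  hence "card triples \<le> card (\<Union>T\<in>S. meeting T)"
    using fin_S C by (intro card_mono) (auto simp: meeting_def)
  also have "\<dots> \<le> (\<Sum>T\<in>S. card (meeting T))" by (rule card_UN_le[OF fin_S])
  also have "\<dots> \<le> (\<Sum>T\<in>S. 1 + 3 * (card C - 3))"
    using S card_triples_meeting_in_two_le[OF C] unfolding meeting_def packings_def triples_def
    by (intro sum_mono) blast
  finally have "card C choose 3 \<le> card S * (1 + 3 * (card C - 3))"
    using n_subsets[OF C, of 3] unfolding triples_def by simp
  thus ?thesis using that S unfolding packings_def triples_def by blast
qed

lemma clique_number_attained:
  assumes "finite V"
  obtains C where "is_clique V D C" "card C = clique_number V D"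
proof -
  have "{C. is_clique V D C} \<subseteq> Pow V" unfolding is_clique_def by auto
  hence "finite (card ` {C. is_clique V D C})" using assms by (auto intro: finite_subset)
  moreover have "{} \<in> {C. is_clique V D C}" unfolding is_clique_def by simp
  ultimately have "clique_number V D \<in> card ` {C. is_clique V D C}"
    unfolding clique_number_def by (intro Max_in) auto
  thus ?thesis using that by auto
qed

lemma large_triangle_packing:
  assumes G: "oriented_simple_graph V D"
  obtains S where "S \<subseteq> triangles V D" "finite S" "pairwise (\<lambda>T T'. card (T \<inter> T') \<le> 1) S"
    and "clique_number V D choose 3 \<le> card S * (1 + 3 * (clique_number V D - 3))"
proof -
  obtain C where C: "is_clique V D C" "card C = clique_number V D"
    using clique_number_attained[OF oriented_simple_graphD(1)[OF G]] .
  have fin_C: "finite C"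
    using C(1) oriented_simple_graphD(1)[OF G] unfolding is_clique_def by (auto intro: finite_subset)
  obtain S where S: "S \<subseteq> {T. T \<subseteq> C \<and> card T = 3}" "pairwise (\<lambda>T T'. card (T \<inter> T') \<le> 1) S"
    and bound: "card C choose 3 \<le> card S * (1 + 3 * (card C - 3))"
    using large_triple_packing_exists[OF fin_C] .
  have "T \<in> triangles V D" if "T \<in> S" for T
  proof -
    have "T \<subseteq> C" "card T = 3" using S(1) that by auto
    thus ?thesis using C(1) unfolding triangles_def is_triangle_def is_clique_def by auto
  qed
  hence "S \<subseteq> triangles V D" by blast
  moreover have "finite S" using S(1) fin_C by (auto intro: finite_subset)
  moreover note S(2)
  moreover have "clique_number V D choose 3 \<le> card S * (1 + 3 * (clique_number V D - 3))"
    using bound unfolding C(2) .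
  ultimately show ?thesis by (rule that)
qed

theorem corollary5p9:
  fixes V :: "'a set" and D :: "('a \<times> 'a) set" and es :: "('a \<times> 'a) list"
  assumes "oriented_simple_graph V D"
    and "D \<noteq> {}"
    and "distinct es" and "set es = D"
  shows "real (num_eigs_ge (helmholtzian V D es) 3) \<ge>
           real (clique_number V D choose 3) / (1 + 3 * (real (clique_number V D) - 3))"
proof (cases "clique_number V D < 3")
  case True
  \<comment> \<open>The right-hand side vanishes.\<close>
  hence "clique_number V D choose 3 = 0" by (simp add: binomial_eq_0)
  thus ?thesis by (simp del: binomial_eq_0_iff)
next
  case False
  let ?\<omega> = "clique_number V D"
  obtain S where S: "S \<subseteq> triangles V D" "finite S" "pairwise (\<lambda>T T'. card (T \<inter> T') \<le> 1) S"
    and bound: "?\<omega> choose 3 \<le> card S * (1 + 3 * (?\<omega> - 3))"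
    using large_triangle_packing[OF assms(1)] .
  have eigs: "real (card S) \<le> real (num_eigs_ge (helmholtzian V D es) 3)"
    using num_eigs_ge_3_triangle_packing[OF assms(1,3,4) S] by simp
  have pos: "0 < 1 + 3 * (real ?\<omega> - 3)" using False by simp
  have "real (?\<omega> choose 3) \<le> real (card S * (1 + 3 * (?\<omega> - 3)))"
    using bound by (simp only: of_nat_le_iff)
  also have "\<dots> = real (card S) * (1 + 3 * (real ?\<omega> - 3))"
    using False by (simp add: of_nat_diff algebra_simps)
  finally have "real (?\<omega> choose 3) / (1 + 3 * (real ?\<omega> - 3)) \<le> real (card S)"
    by (subst pos_divide_le_eq[OF pos])
  thus ?thesis using eigs by linarith
qed

end
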